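(* Let $m\ge 2$ be an integer and let $c>1$ be a real number which is not an integer. Then the sequence $x=(\lfloor n^c\rfloor \bmod m)_{n}$ is not normal. More precisely, there exist a positive integer $k$ and a block $B\in\{0,1,\ldots,m-1\}^k$ which does not appear in $x$ (i.e. there is no $n$ with $(x_n,x_{n+1},\ldots,x_{n+k-1})=B$).
   Context: A sequence $(v_n)_n$ with values in $\{0,1,\ldots,m-1\}$ is called $k$-normal if for every block $B\in\{0,\ldots,m-1\}^k$ one has $\lim_{N\to\infty}\frac1N\operatorname{Card}\{n<N: (v_n,\ldots,v_{n+k-1})=B\}=m^{-k}$; it is called normal if it is $k$-normal for every positive integer $k$. *)

theory Defs
  imports "HOL-Analysis.Analysis"
begin

definition block_at :: "(nat \<Rightarrow> nat) \<Rightarrow> nat \<Rightarrow> nat \<Rightarrow> nat list" where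
  "block_at v k n = map (\<lambda>i. v (n + i)) [0..<k]"

definition k_normal :: "nat \<Rightarrow> nat \<Rightarrow> (nat \<Rightarrow> nat) \<Rightarrow> bool" where
  "k_normal m k v \<longleftrightarrow>
     (\<forall>B. length B = k \<and> set B \<subseteq> {0..<m} \<longrightarrow>
        (\<lambda>N. real (card {n. n < N \<and> block_at v k n = B}) / real N)
          \<longlonglongrightarrow> 1 / real m ^ k)"

definition normal_seq :: "nat \<Rightarrow> (nat \<Rightarrow> nat) \<Rightarrow> bool" where
  "normal_seq m v \<longleftrightarrow> (\<forall>k>0. k_normal m k v)"

end

(*
  Let r = ceil c, so that r - 1 < c < r.  Subtract from floor ((n + i) powr c) the
  integer-valued polynomial of degree < r that agrees with it at i = 0, ..., r - 1; modulo m
  this polynomial depends only on the digits x_n, ..., x_(n+r-1).  The remainder is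
  floor (psi_n i), where every r-th divided difference of psi_n equals that of
  (n + i) powr c and hence lies in (0, C n powr (c - r)], which tends to 0.

  So for large n and i < K the values floor (psi_n i) are polynomially bounded in K, and
  they are recorded by the trace of the subgraph of psi_n on a grid of polynomial size.
  These traces shatter no r + 1 points, because a divided difference of integers at nodes
  below K is either <= 0 or at least 1 / K ^ (r (r + 1)).  By the Sauer-Shelah lemma only
  polynomially many blocks x_n ... x_(n+K-1) occur, fewer than the m ^ K possible ones
  once K is large.
*)

theory Submission
  imports Defs "HOL-Real_Asymp.Real_Asymp"
begin

section \<open>Divided differences\<close>

definition node_prod :: "nat set \<Rightarrow> nat \<Rightarrow> int" where
  "node_prod X x = (\<Prod>z\<in>X - {x}. int x - int z)"

definition divided_diff :: "nat set \<Rightarrow> (nat \<Rightarrow> real) \<Rightarrow> real" where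
  "divided_diff X g = (\<Sum>x\<in>X. g x / of_int (node_prod X x))"

lemma node_prod_nonzero: "node_prod X x \<noteq> 0"
  unfolding node_prod_def by (cases "finite X") auto

lemma node_prod_abs_ge_1: "1 \<le> \<bar>real_of_int (node_prod X x)\<bar>"
  using node_prod_nonzero[of X x] by linarith

lemma node_prod_abs_le:
  assumes "finite X" "X \<subseteq> {..<K}" "x \<in> X"
  shows "\<bar>real_of_int (node_prod X x)\<bar> \<le> real K ^ (card X - 1)"
proof -
  have "\<bar>real_of_int (node_prod X x)\<bar> = (\<Prod>z\<in>X - {x}. \<bar>real x - real z\<bar>)"
    unfolding node_prod_def by (simp add: abs_prod)
  also have "\<dots> \<le> real K ^ (card X - 1)"
  proof (rule prod_le_power)
    show "0 \<le> \<bar>real x - real z\<bar> \<and> \<bar>real x - real z\<bar> \<le> real K" if "z \<in> X - {x}" for z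
    proof -
      have "x < K" "z < K" using that assms by auto
      then show ?thesis by linarith
    qed
  qed (use assms in auto)
  finally show ?thesis .
qed

lemma node_prod_insert_self: "node_prod (insert u W) u = node_prod W u"
  unfolding node_prod_def by (simp add: insert_Diff_if)

lemma node_prod_insert:
  "finite W \<Longrightarrow> u \<notin> W \<Longrightarrow> x \<noteq> u \<Longrightarrow> node_prod (insert u W) x = node_prod W x * (int x - int u)"
  unfolding node_prod_def by (simp add: insert_Diff_if mult.commute)

lemma divided_diff_insert:
  assumes "finite W" "u \<notin> W"
  shows "divided_diff (insert u W) g =
    g u / of_int (node_prod W u) + (\<Sum>x\<in>W. g x / (of_int (node_prod W x) * (real x - real u)))"
proof -
  have "node_prod (insert u W) x = node_prod W x * (int x - int u)" if "x \<in> W" for x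
    using that assms by (auto intro: node_prod_insert)
  then show ?thesis
    unfolding divided_diff_def using assms by (simp add: node_prod_insert_self)
qed

lemma divided_diff_recurrence:
  assumes W: "finite W" "u \<notin> W" "v \<notin> W" and "u \<noteq> v"
  shows "divided_diff (insert u W) g - divided_diff (insert v W) g =
    (real u - real v) * divided_diff (insert u (insert v W)) g"
proof -
  have "divided_diff (insert u (insert v W)) g = g u / (of_int (node_prod W u) * (real u - real v))
      + g v / (of_int (node_prod W v) * (real v - real u))
      + (\<Sum>x\<in>W. g x / (of_int (node_prod W x) * (real x - real v) * (real x - real u)))"
  proof -
    have "node_prod (insert v W) x = node_prod W x * (int x - int v)" if "x \<in> W" for x
      using that assms by (auto intro: node_prod_insert)
    moreover have "node_prod (insert v W) u = node_prod W u * (int u - int v)"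
      using assms by (auto intro: node_prod_insert)
    ultimately show ?thesis
      using assms by (simp add: divided_diff_insert node_prod_insert_self add.assoc)
  qed
  moreover have "(\<Sum>x\<in>W. g x / (of_int (node_prod W x) * (real x - real u)))
      - (\<Sum>x\<in>W. g x / (of_int (node_prod W x) * (real x - real v)))
      = (real u - real v) * (\<Sum>x\<in>W. g x / (of_int (node_prod W x) * (real x - real v) * (real x - real u)))"
    unfolding sum_subtractf[symmetric] sum_distrib_left
  proof (rule sum.cong)
    have partial_fractions: "y / (p * a) - y / (p * b) = (b - a) * (y / (p * b * a))"
      if "p \<noteq> 0" "a \<noteq> 0" "b \<noteq> 0" for y p a b :: real
      using that by (simp add: field_simps)
    fix x assume "x \<in> W"
    then have "real x - real u \<noteq> 0" "real x - real v \<noteq> 0" using W by auto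
    then show "g x / (of_int (node_prod W x) * (real x - real u))
        - g x / (of_int (node_prod W x) * (real x - real v))
        = (real u - real v) * (g x / (of_int (node_prod W x) * (real x - real v) * (real x - real u)))"
      using partial_fractions[of "of_int (node_prod W x)"] node_prod_nonzero[of W x] by simp
  qed simp
  moreover have "(real u - real v) * (g u / (of_int (node_prod W u) * (real u - real v)))
      = g u / of_int (node_prod W u)"
    "(real u - real v) * (g v / (of_int (node_prod W v) * (real v - real u)))
      = - (g v / of_int (node_prod W v))"
    using \<open>u \<noteq> v\<close> node_prod_nonzero[of W u] node_prod_nonzero[of W v] by (simp_all add: field_simps)
  ultimately show ?thesis
    using W by (simp add: divided_diff_insert distrib_left)
qed

lemma divided_diff_split:
  assumes "finite X" "a \<in> X" "b \<in> X" "a \<noteq> b" "y \<notin> X"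
  defines "Z \<equiv> X - {a, b}"
  shows "(real b - real a) * divided_diff X g =
    (real b - real y) * divided_diff (insert b (insert y Z)) g +
    (real y - real a) * divided_diff (insert a (insert y Z)) g"
proof -
  have Z: "finite Z" "a \<notin> Z" "b \<notin> Z" "y \<notin> Z" "y \<noteq> a" "y \<noteq> b"
    using assms by auto
  have X: "X = insert a (insert b Z)" "X = insert b (insert a Z)"
    "insert y X = insert a (insert y (insert b Z))" "insert y X = insert b (insert y (insert a Z))"
    using assms by auto
  have "insert y (insert b Z) = insert b (insert y Z)"
    "insert y (insert a Z) = insert a (insert y Z)" by auto
  then have eqs: "divided_diff (insert b (insert y Z)) g
      = divided_diff X g - (real a - real y) * divided_diff (insert y X) g"
    "divided_diff (insert a (insert y Z)) g
      = divided_diff X g - (real b - real y) * divided_diff (insert y X) g"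
    using divided_diff_recurrence[of "insert b Z" a y g]
      divided_diff_recurrence[of "insert a Z" b y g] Z assms
    unfolding X[symmetric] by simp_all
  show ?thesis unfolding eqs by (simp add: algebra_simps)
qed

lemma divided_diff_split_in_convex:
  assumes "convex C" "finite X" "a \<in> X" "b \<in> X" "a < y" "y < b" "y \<notin> X"
    and "divided_diff (insert b (insert y (X - {a, b}))) g \<in> C"
    and "divided_diff (insert a (insert y (X - {a, b}))) g \<in> C"
  shows "divided_diff X g \<in> C"
proof -
  let ?D\<^sub>1 = "divided_diff (insert b (insert y (X - {a, b}))) g"
  let ?D\<^sub>2 = "divided_diff (insert a (insert y (X - {a, b}))) g"
  have "(real b - real a) * divided_diff X g = (real b - real y) * ?D\<^sub>1 + (real y - real a) * ?D\<^sub>2"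
    using divided_diff_split[OF assms(2-4) _ assms(7)] assms(5,6) by simp
  then have "divided_diff X g = ((real b - real y) * ?D\<^sub>1 + (real y - real a) * ?D\<^sub>2) / (real b - real a)"
    using assms(5,6) by (simp add: field_simps)
  also have "\<dots> = ((real b - real y) / (real b - real a)) * ?D\<^sub>1
      + ((real y - real a) / (real b - real a)) * ?D\<^sub>2"
    by (simp add: add_divide_distrib)
  also have "\<dots> \<in> C"
  proof (rule convexD[OF assms(1,8,9), simplified])
    show "(real b - real y) / (real b - real a) + (real y - real a) / (real b - real a) = 1"
      using assms(5,6) by (simp add: add_divide_distrib[symmetric])
  qed (use assms(5,6) in auto)
  finally show ?thesis .
qed

lemma Max_diff_Min_le:
  assumes "finite Y" "Y \<noteq> {}" "Y \<subseteq> {lo..hi}"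
  shows "Max Y - Min Y \<le> hi - (lo :: nat)"
proof -
  have "Max Y \<in> Y" "Min Y \<in> Y" using assms(1,2) by simp_all
  then have "Max Y \<le> hi" "lo \<le> Min Y" using assms(3) by auto
  then show ?thesis by linarith
qed

text \<open>By induction on \<open>Max X - Min X\<close>: if \<open>X\<close> is not an interval, \<open>divided_diff_split\<close>
  writes its divided difference as a convex combination of two with smaller spread.\<close>

lemma divided_diff_in_convex:
  assumes "convex C" and consecutive: "\<And>l. divided_diff {l..l + k} g \<in> C"
  shows "card X = Suc k \<Longrightarrow> divided_diff X g \<in> C"
proof (induction "Max X - Min X" arbitrary: X rule: less_induct)
  case less
  have X: "finite X" "X \<noteq> {}" using less.prems card.infinite by fastforce+
  define a where "a = Min X"
  define b where "b = Max X"
  have ab: "a \<in> X" "b \<in> X" "X \<subseteq> {a..b}" using X unfolding a_def b_def by auto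
  show ?case
  proof (cases "X = {a..b}")
    case True
    with less.prems ab have "b = a + k" by simp
    then show ?thesis using consecutive[of a] True by simp
  next
    case False
    then obtain y where y: "y \<in> {a..b}" "y \<notin> X" using ab(3) by blast
    then have "a < y" "y < b" using ab by (auto simp: order.order_iff_strict)
    define Z where "Z = X - {a, b}"
    define X\<^sub>1 where "X\<^sub>1 = insert b (insert y Z)"
    define X\<^sub>2 where "X\<^sub>2 = insert a (insert y Z)"
    have "card Z = k - 1" "k \<ge> 1"
      using less.prems ab \<open>a < y\<close> \<open>y < b\<close> X(1) card_mono[of X "{a, b}"] unfolding Z_def
      by (auto simp: card_Diff_subset)
    moreover have "finite Z" "a \<notin> Z" "b \<notin> Z" "y \<notin> Z" "Z \<subseteq> {a<..<b}"
      using X ab y unfolding Z_def by auto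
    ultimately have card: "card X\<^sub>1 = Suc k" "card X\<^sub>2 = Suc k"
      and sub: "X\<^sub>1 \<subseteq> {Suc a..b}" "X\<^sub>2 \<subseteq> {a..b - 1}"
      using \<open>a < y\<close> \<open>y < b\<close> unfolding X\<^sub>1_def X\<^sub>2_def by (auto simp: subset_iff)
    have "finite X\<^sub>1" "X\<^sub>1 \<noteq> {}" "finite X\<^sub>2" "X\<^sub>2 \<noteq> {}"
      unfolding X\<^sub>1_def X\<^sub>2_def using \<open>finite Z\<close> by simp_all
    then have "Max X\<^sub>1 - Min X\<^sub>1 < Max X - Min X" "Max X\<^sub>2 - Min X\<^sub>2 < Max X - Min X"
      using Max_diff_Min_le[OF _ _ sub(1)] Max_diff_Min_le[OF _ _ sub(2)] \<open>a < y\<close> \<open>y < b\<close>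
      unfolding a_def[symmetric] b_def[symmetric] by fastforce+
    then have "divided_diff X\<^sub>1 g \<in> C" "divided_diff X\<^sub>2 g \<in> C"
      using less.hyps card by blast+
    then show ?thesis
      using divided_diff_split_in_convex[OF assms(1) X(1) ab(1,2) \<open>a < y\<close> \<open>y < b\<close> y(2)]
      unfolding X\<^sub>1_def X\<^sub>2_def Z_def by blast
  qed
qed

lemma divided_diff_singleton: "divided_diff {l} g = g l"
  unfolding divided_diff_def node_prod_def by simp

lemma divided_diff_Suc_interval:
  "divided_diff {Suc l..Suc (l + k)} g - divided_diff {l..l + k} g
    = (real k + 1) * divided_diff {l..Suc (l + k)} g"
proof -
  have "insert (Suc (l + k)) {Suc l..l + k} = {Suc l..Suc (l + k)}"
    "insert l {Suc l..l + k} = {l..l + k}"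
    "insert (Suc (l + k)) (insert l {Suc l..l + k}) = {l..Suc (l + k)}" by auto
  then show ?thesis
    using divided_diff_recurrence[of "{Suc l..l + k}" "Suc (l + k)" l g] by simp
qed

lemma divided_diff_image_Suc: "divided_diff (Suc ` X) g = divided_diff X (\<lambda>i. g (Suc i))"
proof -
  have "node_prod (Suc ` X) (Suc x) = node_prod X x" for x
  proof -
    have "Suc ` X - {Suc x} = Suc ` (X - {x})" by auto
    then show ?thesis unfolding node_prod_def by (simp add: prod.reindex)
  qed
  then show ?thesis unfolding divided_diff_def by (simp add: sum.reindex)
qed

lemma divided_diff_diff: "divided_diff X (\<lambda>i. g i - h i) = divided_diff X g - divided_diff X h"
  unfolding divided_diff_def by (simp add: diff_divide_distrib sum_subtractf)

lemma divided_diff_sum: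
  "divided_diff X (\<lambda>i. \<Sum>j\<in>J. a j * h j i) = (\<Sum>j\<in>J. a j * divided_diff X (h j))"
  unfolding divided_diff_def
  by (simp add: sum_divide_distrib sum_distrib_left sum.swap[of _ J X] mult.assoc)

lemma divided_diff_mean_value:
  assumes "\<And>j y. j < k \<Longrightarrow> real l \<le> y \<Longrightarrow> y \<le> real l + real k \<Longrightarrow>
    (G j has_real_derivative G (Suc j) y) (at y)"
  shows "\<exists>\<xi>. real l \<le> \<xi> \<and> \<xi> \<le> real l + real k \<and>
    divided_diff {l..l + k} (\<lambda>i. G 0 (real i)) = G k \<xi> / fact k"
  using assms
proof (induction k arbitrary: G)
  case 0
  then show ?case by (auto simp: divided_diff_singleton)
next
  case (Suc k)
  define G' where "G' j y = G j (y + 1) - G j y" for j y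
  have "(G' j has_real_derivative G' (Suc j) y) (at y)"
    if "j < k" "real l \<le> y" "y \<le> real l + real k" for j y
  proof -
    have "((\<lambda>y. G j (y + 1)) has_real_derivative G (Suc j) (y + 1)) (at y)"
      using Suc.prems[of j "y + 1"] that DERIV_shift by auto
    then show ?thesis
      unfolding G'_def using Suc.prems[of j y] that by (auto intro: DERIV_diff)
  qed
  then obtain \<xi> where \<xi>: "real l \<le> \<xi>" "\<xi> \<le> real l + real k"
    and DD_G': "divided_diff {l..l + k} (\<lambda>i. G' 0 (real i)) = G' k \<xi> / fact k"
    using Suc.IH by blast
  obtain z where z: "\<xi> < z" "z < \<xi> + 1" "G k (\<xi> + 1) - G k \<xi> = G (Suc k) z"
    using MVT2[of \<xi> "\<xi> + 1" "G k" "G (Suc k)"] Suc.prems \<xi> by auto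
  have "divided_diff {Suc l..Suc (l + k)} (\<lambda>i. G 0 (real i))
      = divided_diff {l..l + k} (\<lambda>i. G 0 (real i + 1))"
    using divided_diff_image_Suc[of "{l..l + k}" "\<lambda>i. G 0 (real i)"]
    by (simp add: image_Suc_atLeastAtMost add.commute)
  then have "(real k + 1) * divided_diff {l..Suc (l + k)} (\<lambda>i. G 0 (real i))
      = divided_diff {l..l + k} (\<lambda>i. G' 0 (real i))"
    using divided_diff_Suc_interval[of l k "\<lambda>i. G 0 (real i)"]
    unfolding G'_def divided_diff_diff by simp
  also have "\<dots> = G (Suc k) z / fact k" using DD_G' z unfolding G'_def by simp
  finally have "divided_diff {l..l + Suc k} (\<lambda>i. G 0 (real i)) = G (Suc k) z / fact k / (real k + 1)"
    by (simp add: eq_divide_eq mult.commute)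
  then have "divided_diff {l..l + Suc k} (\<lambda>i. G 0 (real i)) = G (Suc k) z / fact (Suc k)"
    by (simp add: fact_Suc mult.commute)
  then show ?case using \<xi> z by (intro exI[of _ z]) auto
qed

lemma divided_diff_binomial:
  "divided_diff {l..l + k} (\<lambda>i. real (i choose j)) =
    (if k \<le> j then real (l choose (j - k)) / fact k else 0)"
proof (induction k arbitrary: l)
  case 0
  then show ?case by (simp add: divided_diff_singleton)
next
  case (Suc k)
  have "(real k + 1) * divided_diff {l..l + Suc k} (\<lambda>i. real (i choose j))
      = divided_diff {Suc l..Suc l + k} (\<lambda>i. real (i choose j))
        - divided_diff {l..l + k} (\<lambda>i. real (i choose j))"
    using divided_diff_Suc_interval[of l k] by simp
  also have "\<dots> = (if Suc k \<le> j then real (l choose (j - Suc k)) / fact k else 0)"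
  proof (cases "k < j")
    case True
    then have "j - k = Suc (j - Suc k)" by simp
    then show ?thesis
      using True Suc.IH[of l] Suc.IH[of "Suc l"] by (simp add: diff_divide_distrib[symmetric])
  next
    case False
    then show ?thesis using Suc.IH[of l] Suc.IH[of "Suc l"] by (cases "k = j") auto
  qed
  finally have "divided_diff {l..l + Suc k} (\<lambda>i. real (i choose j))
      = (if Suc k \<le> j then real (l choose (j - Suc k)) / fact k else 0) / (real k + 1)"
    by (simp add: eq_divide_eq mult.commute)
  then show ?case by (simp add: fact_Suc mult.commute)
qed

lemma divided_diff_mono_sign:
  assumes "\<And>x. x \<in> X \<Longrightarrow> 0 < node_prod X x \<Longrightarrow> h x \<le> g x"
    and "\<And>x. x \<in> X \<Longrightarrow> node_prod X x < 0 \<Longrightarrow> g x \<le> h x"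
  shows "divided_diff X h \<le> divided_diff X g"
  unfolding divided_diff_def
proof (rule sum_mono)
  fix x assume "x \<in> X"
  then show "h x / of_int (node_prod X x) \<le> g x / of_int (node_prod X x)"
    using assms[of x] node_prod_nonzero[of X x]
    by (cases "0 < node_prod X x") (auto intro: divide_right_mono divide_right_mono_neg)
qed

lemma divided_diff_int_ge:
  assumes X: "finite X" "X \<subseteq> {..<K}"
    and pos: "0 < divided_diff X (\<lambda>x. of_int (t x))"
  shows "1 \<le> divided_diff X (\<lambda>x. of_int (t x)) * real K ^ ((card X - 1) * card X)"
proof -
  define \<tau> where "\<tau> = divided_diff X (\<lambda>x. of_int (t x))"
  define Q where "Q = (\<Prod>y\<in>X. real_of_int (node_prod X y))"
  have "\<tau> * Q = (\<Sum>x\<in>X. of_int (t x) / of_int (node_prod X x) * Q)"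
    unfolding \<tau>_def divided_diff_def by (simp add: sum_distrib_right)
  also have "\<dots> = of_int (\<Sum>x\<in>X. t x * (\<Prod>y\<in>X - {x}. node_prod X y))"
  proof -
    have "of_int (t x) / of_int (node_prod X x) * Q = of_int (t x) * (\<Prod>y\<in>X - {x}. of_int (node_prod X y))"
      if "x \<in> X" for x
      using prod.remove[OF X(1) that, of "\<lambda>y. real_of_int (node_prod X y)"] node_prod_nonzero[of X x]
      unfolding Q_def by simp
    then show ?thesis by simp
  qed
  finally have int: "\<tau> * Q = of_int (\<Sum>x\<in>X. t x * (\<Prod>y\<in>X - {x}. node_prod X y))" .
  have "Q \<noteq> 0" unfolding Q_def using X(1) node_prod_nonzero by simp
  then have "\<tau> * Q \<noteq> 0" using pos unfolding \<tau>_def by simp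
  then have "(\<Sum>x\<in>X. t x * (\<Prod>y\<in>X - {x}. node_prod X y)) \<noteq> 0" using int by (metis of_int_0)
  then have "1 \<le> \<bar>\<tau> * Q\<bar>" unfolding int by (metis of_int_1_le_iff of_int_abs zero_less_abs_iff int_one_le_iff_zero_less)
  also have "\<bar>Q\<bar> \<le> (real K ^ (card X - 1)) ^ card X"
    unfolding Q_def abs_prod
  proof (rule prod_le_power)
    show "1 \<le> real K ^ (card X - 1)"
    proof (cases "X = {}")
      case False
      then have "1 \<le> K" using X(2) by fastforce
      then show ?thesis by simp
    qed simp
  qed (use X node_prod_abs_le[OF X] in auto)
  then have "\<bar>\<tau> * Q\<bar> \<le> \<tau> * real K ^ ((card X - 1) * card X)"
    using pos unfolding \<tau>_def by (simp add: abs_mult power_mult mult_left_mono)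
  finally show ?thesis unfolding \<tau>_def .
qed

lemma abs_le_divided_diff_bound:
  assumes "finite X" "i \<in> X" "\<bar>divided_diff X g\<bar> \<le> 1" "\<And>x. x \<in> X - {i} \<Longrightarrow> \<bar>g x\<bar> \<le> 1"
  shows "\<bar>g i\<bar> \<le> \<bar>real_of_int (node_prod X i)\<bar> * card X"
proof -
  have "\<bar>\<Sum>x\<in>X - {i}. g x / of_int (node_prod X x)\<bar> \<le> (\<Sum>x\<in>X - {i}. \<bar>g x / of_int (node_prod X x)\<bar>)"
    by (rule sum_abs)
  also have "\<dots> \<le> (\<Sum>x\<in>X - {i}. 1)"
  proof (rule sum_mono)
    fix x assume "x \<in> X - {i}"
    then have "\<bar>g x\<bar> \<le> \<bar>real_of_int (node_prod X x)\<bar>"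
      using assms(4) node_prod_abs_ge_1[of X x] by fastforce
    then show "\<bar>g x / of_int (node_prod X x)\<bar> \<le> 1"
      using node_prod_nonzero[of X x] by (simp add: abs_divide divide_le_eq_1)
  qed
  also have "\<dots> = real (card (X - {i}))" by simp
  also have "real (card (X - {i})) = real (card X) - 1"
  proof -
    have "1 \<le> card X" using assms(1,2) card_gt_0_iff[of X] by auto
    then show ?thesis using assms(1,2) by (simp add: of_nat_diff)
  qed
  finally have "\<bar>\<Sum>x\<in>X - {i}. g x / of_int (node_prod X x)\<bar> \<le> real (card X) - 1" .
  moreover have "divided_diff X g = g i / of_int (node_prod X i) + (\<Sum>x\<in>X - {i}. g x / of_int (node_prod X x))"
    unfolding divided_diff_def using sum.remove[OF assms(1,2)] by blast
  ultimately have "\<bar>g i / of_int (node_prod X i)\<bar> \<le> card X"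
    using assms(3) by linarith
  then show ?thesis
    using node_prod_nonzero[of X i] by (simp add: abs_divide divide_le_eq mult.commute)
qed

section \<open>The Sauer--Shelah lemma\<close>

definition shatters :: "'a set set \<Rightarrow> 'a set \<Rightarrow> bool" where
  "shatters F Y \<longleftrightarrow> (\<forall>Z\<subseteq>Y. \<exists>A\<in>F. A \<inter> Y = Z)"

lemma shatters_empty_iff: "shatters F {} \<longleftrightarrow> F \<noteq> {}"
  unfolding shatters_def by auto

lemma shatters_by_traces:
  assumes "shatters G Y" "\<And>B. B \<in> G \<Longrightarrow> \<exists>A\<in>F. A \<inter> Y = B \<inter> Y"
  shows "shatters F Y"
  using assms unfolding shatters_def by metis

lemma card_split_at:
  assumes "finite F"
  shows "card F = card {A\<in>F. x \<notin> A} + card ((\<lambda>A. A - {x}) ` {A\<in>F. x \<in> A})"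
proof -
  have "inj_on (\<lambda>A. A - {x}) {A\<in>F. x \<in> A}"
    by (rule inj_onI) (metis (no_types, lifting) insert_Diff mem_Collect_eq)
  moreover have "F = {A\<in>F. x \<notin> A} \<union> {A\<in>F. x \<in> A}" by auto
  ultimately show ?thesis
    using assms card_Un_disjoint[of "{A\<in>F. x \<notin> A}" "{A\<in>F. x \<in> A}"]
    by (simp add: card_image disjoint_iff)
qed

lemma shatters_of_shatters_traces:
  assumes "shatters G Y" "x \<notin> Y" "\<And>B. B \<in> G \<Longrightarrow> B \<in> F \<or> insert x B \<in> F"
  shows "shatters F Y"
proof (rule shatters_by_traces[OF assms(1)])
  fix B assume "B \<in> G"
  then consider "B \<in> F" | "insert x B \<in> F" using assms(3) by blast
  then show "\<exists>A\<in>F. A \<inter> Y = B \<inter> Y"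
  proof cases
    case 2
    then show ?thesis using assms(2) by (intro bexI[of _ "insert x B"]) auto
  qed auto
qed

lemma shatters_insert_of_shatters_traces:
  assumes "shatters G Y" "x \<notin> Y" "\<And>B. B \<in> G \<Longrightarrow> x \<notin> B \<and> B \<in> F \<and> insert x B \<in> F"
  shows "shatters F (insert x Y)"
  unfolding shatters_def
proof (intro allI impI)
  fix Z assume Z: "Z \<subseteq> insert x Y"
  then have "Z - {x} \<subseteq> Y" by auto
  then obtain B where B: "B \<in> G" "B \<inter> Y = Z - {x}" using assms(1) unfolding shatters_def by blast
  then have "x \<notin> B" "B \<in> F" "insert x B \<in> F" using assms(3) by auto
  show "\<exists>A\<in>F. A \<inter> insert x Y = Z"
  proof (cases "x \<in> Z")
    case True
    then have "insert x B \<inter> insert x Y = Z" using B(2) Z by auto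
    then show ?thesis using \<open>insert x B \<in> F\<close> by blast
  next
    case False
    then have "B \<inter> insert x Y = Z" using B(2) Z \<open>x \<notin> B\<close> by auto
    then show ?thesis using \<open>B \<in> F\<close> by blast
  qed
qed

lemma sauer_shelah:
  assumes "finite X" "F \<subseteq> Pow X" "\<And>Y. Y \<subseteq> X \<Longrightarrow> card Y = Suc d \<Longrightarrow> \<not> shatters F Y"
  shows "card F \<le> (card X + 1) ^ d"
  using assms
proof (induction X arbitrary: F d rule: finite_induct)
  case empty
  then have "F \<subseteq> {{}}" by auto
  then show ?case using card_mono[of "{{}}" F] by simp
next
  case (insert x X)
  define F\<^sub>0 where "F\<^sub>0 = {A\<in>F. x \<notin> A}"
  define F\<^sub>1 where "F\<^sub>1 = (\<lambda>A. A - {x}) ` {A\<in>F. x \<in> A}"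
  have sub: "F\<^sub>0 \<union> F\<^sub>1 \<subseteq> Pow X" using insert.prems(1) unfolding F\<^sub>0_def F\<^sub>1_def by auto
  then have fin: "finite F\<^sub>0" "finite F\<^sub>1" using insert.hyps(1) finite_subset by fastforce+
  have card_F: "card F = card (F\<^sub>0 \<union> F\<^sub>1) + card (F\<^sub>0 \<inter> F\<^sub>1)"
    using card_split_at[of F x] card_Un_Int[OF fin] finite_subset[OF insert.prems(1)] insert.hyps(1)
    unfolding F\<^sub>0_def F\<^sub>1_def by simp
  have Un: "B \<in> F \<or> insert x B \<in> F" if "B \<in> F\<^sub>0 \<union> F\<^sub>1" for B
    using that unfolding F\<^sub>0_def F\<^sub>1_def by (auto simp: insert_absorb)
  have Int: "x \<notin> B \<and> B \<in> F \<and> insert x B \<in> F" if "B \<in> F\<^sub>0 \<inter> F\<^sub>1" for B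
    using that unfolding F\<^sub>0_def F\<^sub>1_def by (auto simp: insert_absorb)
  have traces:
    "\<And>Y. x \<notin> Y \<Longrightarrow> shatters (F\<^sub>0 \<union> F\<^sub>1) Y \<Longrightarrow> shatters F Y"
    "\<And>Y. x \<notin> Y \<Longrightarrow> shatters (F\<^sub>0 \<inter> F\<^sub>1) Y \<Longrightarrow> shatters F (insert x Y)"
    using shatters_of_shatters_traces[OF _ _ Un] shatters_insert_of_shatters_traces[OF _ _ Int]
    by blast+
  have "card (F\<^sub>0 \<union> F\<^sub>1) \<le> (card X + 1) ^ d"
  proof (rule insert.IH[OF sub])
    fix Y assume "Y \<subseteq> X" "card Y = Suc d"
    then show "\<not> shatters (F\<^sub>0 \<union> F\<^sub>1) Y"
      using traces(1) insert.prems(2)[of Y] insert.hyps(2) by blast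
  qed
  moreover have "card (F\<^sub>0 \<inter> F\<^sub>1) \<le> (if d = 0 then 0 else (card X + 1) ^ (d - 1))"
  proof -
    have no_shatter: "\<not> shatters (F\<^sub>0 \<inter> F\<^sub>1) Y" if "Y \<subseteq> X" "card Y = d" for Y
    proof
      assume "shatters (F\<^sub>0 \<inter> F\<^sub>1) Y"
      moreover have "x \<notin> Y" "finite Y" using that insert.hyps finite_subset by auto
      ultimately have "shatters F (insert x Y)" using traces(2) by blast
      then show False
        using insert.prems(2)[of "insert x Y"] that \<open>x \<notin> Y\<close> \<open>finite Y\<close> by auto
    qed
    show ?thesis
    proof (cases d)
      case 0
      then show ?thesis using no_shatter[of "{}"] by (simp add: shatters_empty_iff)
    next
      case (Suc d')
      then have "card (F\<^sub>0 \<inter> F\<^sub>1) \<le> (card X + 1) ^ d'"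
        using insert.IH[of "F\<^sub>0 \<inter> F\<^sub>1" d'] sub no_shatter by blast
      then show ?thesis using Suc by simp
    qed
  qed
  moreover have "(card X + 1) ^ d + (if d = 0 then 0 else (card X + 1) ^ (d - 1))
      \<le> (card (insert x X) + 1) ^ d"
  proof (cases d)
    case (Suc d')
    have "(card X + 1) ^ d + (card X + 1) ^ d' = (card X + 2) * (card X + 1) ^ d'"
      using Suc by simp
    also have "\<dots> \<le> (card X + 2) * (card X + 2) ^ d'" by (intro mult_le_mono2 power_mono) auto
    finally show ?thesis using Suc insert.hyps by simp
  qed (simp add: insert.hyps)
  ultimately show ?case unfolding card_F by linarith
qed

section \<open>Subgraphs of functions with small divided differences\<close>

definition subgraph :: "(nat \<Rightarrow> real) \<Rightarrow> (nat \<times> int) set" where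
  "subgraph \<phi> = {(i, t). of_int t \<le> \<phi> i}"

lemma shatters_subgraphs_pattern:
  assumes "shatters (subgraph ` \<Phi>) Y"
  obtains \<phi> where "\<phi> \<in> \<Phi>" "\<And>p. p \<in> Y \<Longrightarrow> of_int (snd p) \<le> \<phi> (fst p) \<longleftrightarrow> \<sigma> p"
proof -
  have "{p\<in>Y. \<sigma> p} \<subseteq> Y" by blast
  then obtain A where "A \<in> subgraph ` \<Phi>" "A \<inter> Y = {p\<in>Y. \<sigma> p}"
    using assms unfolding shatters_def by blast
  then obtain \<phi> where "\<phi> \<in> \<Phi>" "subgraph \<phi> \<inter> Y = {p\<in>Y. \<sigma> p}" by blast
  moreover have "p \<in> subgraph \<phi> \<longleftrightarrow> of_int (snd p) \<le> \<phi> (fst p)" for p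
    by (cases p) (simp add: subgraph_def)
  ultimately show ?thesis using that by blast
qed

lemma inj_on_fst_if_shatters_subgraphs:
  assumes "shatters (subgraph ` \<Phi>) Y"
  shows "inj_on fst Y"
proof (rule inj_onI, rule ccontr)
  have less: "snd q < snd p" if "p \<in> Y" "q \<in> Y" "fst p = fst q" "p \<noteq> q" for p q
  proof -
    obtain \<phi> where \<phi>: "\<phi> \<in> \<Phi>" "\<And>p'. p' \<in> Y \<Longrightarrow> of_int (snd p') \<le> \<phi> (fst p') \<longleftrightarrow> p' = q"
      using shatters_subgraphs_pattern[OF assms, of "\<lambda>p'. p' = q"] by metis
    have "of_int (snd q) \<le> \<phi> (fst p)" "\<not> of_int (snd p) \<le> \<phi> (fst p)"
      using \<phi>(2)[OF that(1)] \<phi>(2)[OF that(2)] that(3,4) by auto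
    then show ?thesis by linarith
  qed
  fix p q assume "p \<in> Y" "q \<in> Y" "fst p = fst q" "p \<noteq> q"
  then show False using less[of p q] less[of q p] by auto
qed

text \<open>A divided difference of integer heights at \<open>r + 1\<close> nodes below \<open>K\<close> is either \<open>\<le> 0\<close> or
  at least \<open>1 / K ^ (r * (r + 1))\<close>; in either case the sign pattern of the node products
  selects a subgraph whose divided difference lies on the wrong side of it.\<close>

lemma not_shatters_subgraphs:
  assumes \<Phi>: "\<And>\<phi> X. \<phi> \<in> \<Phi> \<Longrightarrow> X \<subseteq> {..<K} \<Longrightarrow> card X = Suc r \<Longrightarrow>
      0 < divided_diff X \<phi> \<and> divided_diff X \<phi> * real K ^ (r * Suc r) < 1"
    and Y: "Y \<subseteq> {..<K} \<times> UNIV" "card Y = Suc r"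
  shows "\<not> shatters (subgraph ` \<Phi>) Y"
proof
  assume sh: "shatters (subgraph ` \<Phi>) Y"
  define X where "X = fst ` Y"
  define t where "t x = snd (inv_into Y fst x)" for x
  have tY: "(x, t x) \<in> Y" if "x \<in> X" for x
    using that inv_into_into[of x fst Y] f_inv_into_f[of x fst Y]
    unfolding X_def t_def by (metis prod.collapse)
  have "finite Y" using Y(2) card.infinite by force
  then have X: "finite X" "X \<subseteq> {..<K}" "card X = Suc r"
    using Y card_image[OF inj_on_fst_if_shatters_subgraphs[OF sh]] unfolding X_def by auto
  have pattern: "\<exists>\<phi>\<in>\<Phi>. \<forall>x\<in>X. of_int (t x) \<le> \<phi> x \<longleftrightarrow> \<sigma> x" for \<sigma>
  proof -
    obtain \<phi> where "\<phi> \<in> \<Phi>" "\<And>p. p \<in> Y \<Longrightarrow> of_int (snd p) \<le> \<phi> (fst p) \<longleftrightarrow> \<sigma> (fst p)"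
      using shatters_subgraphs_pattern[OF sh, of "\<lambda>p. \<sigma> (fst p)"] by metis
    then show ?thesis using tY by fastforce
  qed
  define \<tau> where "\<tau> = divided_diff X (\<lambda>x. of_int (t x))"
  show False
  proof (cases "\<tau> \<le> 0")
    case True
    obtain \<phi> where \<phi>: "\<phi> \<in> \<Phi>" "\<forall>x\<in>X. of_int (t x) \<le> \<phi> x \<longleftrightarrow> node_prod X x < 0"
      using pattern[of "\<lambda>x. node_prod X x < 0"] by blast
    then have "divided_diff X \<phi> \<le> \<tau>"
      unfolding \<tau>_def by (intro divided_diff_mono_sign) auto
    then show False using \<Phi>[OF \<phi>(1) X(2,3)] True by linarith
  next
    case False
    obtain \<phi> where \<phi>: "\<phi> \<in> \<Phi>" "\<forall>x\<in>X. of_int (t x) \<le> \<phi> x \<longleftrightarrow> 0 < node_prod X x"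
      using pattern[of "\<lambda>x. 0 < node_prod X x"] by blast
    then have "\<tau> \<le> divided_diff X \<phi>"
      unfolding \<tau>_def by (intro divided_diff_mono_sign) auto
    moreover have "1 \<le> \<tau> * real K ^ (r * Suc r)"
      using divided_diff_int_ge[OF X(1,2), of t] False X(3) unfolding \<tau>_def by simp
    ultimately show False
      using \<Phi>[OF \<phi>(1) X(2,3)] mult_right_mono[of \<tau> "divided_diff X \<phi>" "real K ^ (r * Suc r)"]
      by simp
  qed
qed

section \<open>Integer interpolation of \<open>\<lfloor>(n + i) powr c\<rfloor>\<close>\<close>

fun newton_coeff :: "(nat \<Rightarrow> int) \<Rightarrow> nat \<Rightarrow> int" where
  "newton_coeff s j = s j - (\<Sum>l<j. int (j choose l) * newton_coeff s l)"

declare newton_coeff.simps[simp del]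

lemma newton_interpolation:
  assumes "j < r"
  shows "(\<Sum>l<r. int (j choose l) * newton_coeff s l) = s j"
proof -
  have "(\<Sum>l<r. int (j choose l) * newton_coeff s l) = (\<Sum>l<Suc j. int (j choose l) * newton_coeff s l)"
    using assms by (intro sum.mono_neutral_right) auto
  also have "\<dots> = s j" by (simp add: newton_coeff.simps[of s j])
  finally show ?thesis .
qed

lemma newton_coeff_dvd:
  assumes "\<And>j. j \<le> k \<Longrightarrow> M dvd s j - s' j"
  shows "M dvd newton_coeff s k - newton_coeff s' k"
  using assms
proof (induction k rule: less_induct)
  case (less k)
  have "newton_coeff s k - newton_coeff s' k
      = (s k - s' k) - (\<Sum>l<k. int (k choose l) * (newton_coeff s l - newton_coeff s' l))"
    by (subst (1 2) newton_coeff.simps) (simp add: sum_subtractf algebra_simps)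
  moreover have "M dvd (\<Sum>l<k. int (k choose l) * (newton_coeff s l - newton_coeff s' l))"
    using less by (intro dvd_sum dvd_mult) auto
  ultimately show ?case using less.prems by simp
qed

locale noninteger_power =
  fixes c :: real
  assumes c_pos: "0 < c" and c_not_int: "c \<notin> \<int>"
begin

definition r :: nat where "r = nat \<lceil>c\<rceil>"

lemma r_bounds: "real r - 1 < c" "c < real r"
proof -
  have "c \<noteq> of_int \<lceil>c\<rceil>" using c_not_int by (metis Ints_of_int)
  then have "c < of_int \<lceil>c\<rceil>" using le_of_int_ceiling[of c] by linarith
  moreover have "real r = of_int \<lceil>c\<rceil>" unfolding r_def using c_pos by simp
  ultimately show "real r - 1 < c" "c < real r" using ceiling_correct[of c] by linarith+
qed

text \<open>The \<open>r\<close>-th derivative of \<open>y powr c\<close> is \<open>deriv_factor * y powr (c - r)\<close>.\<close>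

definition deriv_factor :: real where "deriv_factor = (\<Prod>i<r. c - real i)"

lemma deriv_factor_pos: "0 < deriv_factor"
  unfolding deriv_factor_def using r_bounds by (intro prod_pos) auto

definition floor_pow :: "nat \<Rightarrow> nat \<Rightarrow> int" where
  "floor_pow n j = \<lfloor>real (n + j) powr c\<rfloor>"

text \<open>The polynomial of degree \<open>< r\<close> interpolating \<open>floor_pow n\<close> at \<open>0, ..., r - 1\<close>, in the
  binomial basis: it is integer valued, and modulo \<open>m\<close> it only depends on the interpolated
  values modulo \<open>m\<close>.\<close>

definition interp :: "nat \<Rightarrow> nat \<Rightarrow> int" where
  "interp n i = (\<Sum>j<r. int (i choose j) * newton_coeff (floor_pow n) j)"

definition resid :: "nat \<Rightarrow> nat \<Rightarrow> real" where
  "resid n i = real (n + i) powr c - of_int (interp n i)"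

lemma floor_resid: "\<lfloor>resid n i\<rfloor> = floor_pow n i - interp n i"
  unfolding resid_def floor_pow_def by simp

lemma resid_initial: "i < r \<Longrightarrow> 0 \<le> resid n i \<and> resid n i < 1"
  unfolding resid_def interp_def using newton_interpolation[of i r "floor_pow n"]
  by (simp add: floor_pow_def) linarith

lemma divided_diff_interp: "divided_diff {l..l + r} (\<lambda>i. of_int (interp n i)) = 0"
proof -
  have "(\<lambda>i. of_int (interp n i))
      = (\<lambda>i. \<Sum>j<r. of_int (newton_coeff (floor_pow n) j) * real (i choose j))"
    unfolding interp_def by (simp add: mult.commute)
  then show ?thesis by (simp add: divided_diff_sum divided_diff_binomial)
qed

lemma divided_diff_power:
  assumes "1 \<le> n"
  shows "divided_diff {l..l + r} (\<lambda>i. real (n + i) powr c)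
    \<in> {0<..deriv_factor * real n powr (c - real r)}"
proof -
  define G where "G j y = (\<Prod>i<j. c - real i) * (real n + y) powr (c - real j)" for j y
  have "(G j has_real_derivative G (Suc j) y) (at y)" if "real l \<le> y" for j y
  proof -
    have "0 < real n + y" using assms that by linarith
    then have "((\<lambda>y. (real n + y) powr (c - real j)) has_real_derivative
        (c - real j) * (real n + y) powr (c - real j - 1)) (at y)"
      by (auto intro!: derivative_eq_intros)
    then have "((\<lambda>y. (\<Prod>i<j. c - real i) * (real n + y) powr (c - real j)) has_real_derivative
        (\<Prod>i<j. c - real i) * ((c - real j) * (real n + y) powr (c - real j - 1))) (at y)"
      by (rule DERIV_cmult)
    moreover have "(\<Prod>i<j. c - real i) * ((c - real j) * (real n + y) powr (c - real j - 1))
        = G (Suc j) y"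
      unfolding G_def by (simp add: algebra_simps)
    ultimately show ?thesis unfolding G_def by simp
  qed
  then obtain \<xi> where \<xi>: "real l \<le> \<xi>"
    and DD: "divided_diff {l..l + r} (\<lambda>i. G 0 (real i)) = G r \<xi> / fact r"
    using divided_diff_mean_value[of r l G] by auto
  have G: "G r \<xi> = deriv_factor * (real n + \<xi>) powr (c - real r)"
    unfolding G_def deriv_factor_def ..
  have "0 < G r \<xi>" using G deriv_factor_pos assms \<xi> by simp
  moreover have "G r \<xi> \<le> deriv_factor * real n powr (c - real r)"
    unfolding G using assms \<xi> r_bounds deriv_factor_pos
    by (intro mult_left_mono powr_mono2') auto
  moreover have "(\<lambda>i. G 0 (real i)) = (\<lambda>i. real (n + i) powr c)" unfolding G_def by simp
  moreover have "deriv_factor * real n powr (c - real r)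
      \<le> deriv_factor * real n powr (c - real r) * fact r"
    using deriv_factor_pos mult_left_mono[of 1 "fact r" "deriv_factor * real n powr (c - real r)"]
    by simp
  ultimately show ?thesis using DD by (auto simp: divide_le_eq)
qed

lemma divided_diff_resid:
  assumes "1 \<le> n" "card X = Suc r"
  shows "divided_diff X (resid n) \<in> {0<..deriv_factor * real n powr (c - real r)}"
proof (rule divided_diff_in_convex[OF _ _ assms(2)])
  show "divided_diff {l..l + r} (resid n) \<in> {0<..deriv_factor * real n powr (c - real r)}" for l
    using divided_diff_power[OF assms(1), of l] divided_diff_interp[of l n]
    unfolding resid_def divided_diff_diff by simp
qed (rule convex_real_interval)

text \<open>For \<open>flat K n\<close> the \<open>r\<close>-th divided differences of \<open>resid n\<close> at nodes below \<open>K\<close> are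
  smaller than any positive divided difference of integers there (\<open>divided_diff_int_ge\<close>).\<close>

definition flat :: "nat \<Rightarrow> nat \<Rightarrow> bool" where
  "flat K n \<longleftrightarrow> 1 \<le> n \<and> deriv_factor * real n powr (c - real r) * real K ^ (r * Suc r) < 1"

lemma flat_divided_diff:
  assumes "flat K n" "card X = Suc r"
  shows "0 < divided_diff X (resid n) \<and> divided_diff X (resid n) * real K ^ (r * Suc r) < 1"
proof -
  have "divided_diff X (resid n) \<in> {0<..deriv_factor * real n powr (c - real r)}"
    using assms flat_def divided_diff_resid by blast
  then show ?thesis
    using assms(1) mult_right_mono[of _ _ "real K ^ (r * Suc r)"] unfolding flat_def by fastforce
qed

definition height :: "nat \<Rightarrow> nat" where "height K = K ^ r * Suc r + 1"

text \<open>For flat \<open>n\<close>, the trace of the subgraph of \<open>resid n\<close> on \<open>grid K\<close> determines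
  \<open>\<lfloor>resid n i\<rfloor>\<close> for all \<open>i < K\<close>.\<close>

definition grid :: "nat \<Rightarrow> (nat \<times> int) set" where
  "grid K = {..<K} \<times> {- int (height K)..int (height K)}"

lemma floor_resid_bound:
  assumes "flat K n" "i < K"
  shows "\<bar>\<lfloor>resid n i\<rfloor>\<bar> \<le> int (height K)"
proof (cases "i < r")
  case True
  then have "\<lfloor>resid n i\<rfloor> = 0" using resid_initial[of i n] by (simp add: floor_eq_iff)
  then show ?thesis by simp
next
  case False
  define X where "X = insert i {..<r}"
  have X: "finite X" "X \<subseteq> {..<K}" "card X = Suc r" "i \<in> X"
    using False assms(2) unfolding X_def by auto
  have "\<bar>divided_diff X (resid n)\<bar> \<le> 1"
  proof -
    have "1 \<le> real K ^ (r * Suc r)" using assms(2) by simp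
    then show ?thesis
      using flat_divided_diff[OF assms(1) X(3)]
        mult_left_mono[of 1 "real K ^ (r * Suc r)" "divided_diff X (resid n)"]
      by linarith
  qed
  then have "\<bar>resid n i\<bar> \<le> \<bar>real_of_int (node_prod X i)\<bar> * card X"
  proof (rule abs_le_divided_diff_bound[OF X(1,4)])
    show "\<bar>resid n x\<bar> \<le> 1" if "x \<in> X - {i}" for x
      using that resid_initial[of x n] unfolding X_def by auto
  qed
  also have "\<dots> \<le> real K ^ r * Suc r"
    using node_prod_abs_le[OF X(1,2,4)] X(3) by (simp add: mult_right_mono)
  finally have "\<bar>resid n i\<bar> \<le> real K ^ r * real (Suc r)" .
  moreover have "real_of_int \<lfloor>resid n i\<rfloor> \<le> resid n i" "resid n i < real_of_int \<lfloor>resid n i\<rfloor> + 1"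
    by linarith+
  moreover have "real (height K) = real K ^ r * real (Suc r) + 1"
    unfolding height_def by (simp only: of_nat_add of_nat_mult of_nat_power of_nat_1)
  ultimately have "real_of_int \<bar>\<lfloor>resid n i\<rfloor>\<bar> \<le> real (height K)"
    unfolding of_int_abs abs_le_iff by linarith
  then show ?thesis by (metis of_int_le_iff of_int_of_nat_eq)
qed

lemma floor_resid_eq_if_traces_eq:
  assumes "flat K n" "flat K n'" "subgraph (resid n) \<inter> grid K = subgraph (resid n') \<inter> grid K"
    and "i < K"
  shows "\<lfloor>resid n i\<rfloor> = \<lfloor>resid n' i\<rfloor>"
proof -
  have "\<lfloor>resid a i\<rfloor> \<le> \<lfloor>resid b i\<rfloor>"
    if "flat K a" "subgraph (resid a) \<inter> grid K = subgraph (resid b) \<inter> grid K" for a b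
  proof -
    have "(i, \<lfloor>resid a i\<rfloor>) \<in> subgraph (resid a) \<inter> grid K"
      using floor_resid_bound[OF that(1) \<open>i < K\<close>] \<open>i < K\<close> unfolding subgraph_def grid_def by auto
    then have "(i, \<lfloor>resid a i\<rfloor>) \<in> subgraph (resid b)" using that(2) by blast
    then show ?thesis unfolding subgraph_def by (simp add: le_floor_iff)
  qed
  then show ?thesis using assms by (metis order_antisym)
qed

lemma card_traces_le:
  assumes "\<And>n. n \<in> N \<Longrightarrow> flat K n"
  shows "card ((\<lambda>n. subgraph (resid n) \<inter> grid K) ` N) \<le> (card (grid K) + 1) ^ r"
proof (rule sauer_shelah)
  show "finite (grid K)" unfolding grid_def by simp
  show "(\<lambda>n. subgraph (resid n) \<inter> grid K) ` N \<subseteq> Pow (grid K)" by auto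
  fix Y assume Y: "Y \<subseteq> grid K" "card Y = Suc r"
  have "\<not> shatters (subgraph ` resid ` N) Y"
  proof (rule not_shatters_subgraphs)
    fix \<phi> and X :: "nat set" assume "\<phi> \<in> resid ` N" "card X = Suc r"
    then show "0 < divided_diff X \<phi> \<and> divided_diff X \<phi> * real K ^ (r * Suc r) < 1"
      using assms flat_divided_diff by blast
  next
    show "Y \<subseteq> {..<K} \<times> UNIV" using Y(1) unfolding grid_def by auto
  qed (rule Y(2))
  moreover have "\<exists>A\<in>subgraph ` resid ` N. A \<inter> Y = B \<inter> Y"
    if "B \<in> (\<lambda>n. subgraph (resid n) \<inter> grid K) ` N" for B
    using that Y(1) by auto
  ultimately show "\<not> shatters ((\<lambda>n. subgraph (resid n) \<inter> grid K) ` N) Y"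
    using shatters_by_traces by blast
qed

definition flat_from :: "nat \<Rightarrow> nat" where
  "flat_from K = nat \<lceil>(deriv_factor * real K ^ (r * Suc r)) powr (1 / (real r - c))\<rceil> + 1"

lemma flat_if_flat_from_le:
  assumes "flat_from K \<le> n"
  shows "flat K n"
proof -
  define A where "A = deriv_factor * real K ^ (r * Suc r)"
  have "0 \<le> A" unfolding A_def using deriv_factor_pos by simp
  have "r - c > 0" using r_bounds by simp
  have n: "A powr (1 / (real r - c)) < real n" "1 \<le> n"
    using assms unfolding flat_from_def A_def by linarith+
  have "A < real n powr (real r - c)"
  proof (cases "A = 0")
    case False
    then have "A = (A powr (1 / (real r - c))) powr (real r - c)"
      using \<open>0 \<le> A\<close> \<open>r - c > 0\<close> by (simp add: powr_powr)
    also have "\<dots> < real n powr (real r - c)"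
      using n \<open>r - c > 0\<close> by (intro powr_less_mono2) auto
    finally show ?thesis .
  qed (use n in simp)
  then have "A * real n powr (c - real r) < 1"
    using n by (simp add: powr_minus_divide[of _ "real r - c", simplified] divide_less_eq)
  then show ?thesis unfolding flat_def A_def using n by (simp add: algebra_simps)
qed

lemma flat_from_le:
  assumes "1 \<le> K"
  shows "real (flat_from K) \<le>
    deriv_factor powr (1 / (real r - c)) * real K powr (real (r * Suc r) / (real r - c)) + 2"
proof -
  define y where "y = (deriv_factor * real K ^ (r * Suc r)) powr (1 / (real r - c))"
  have "real (flat_from K) = real (nat \<lceil>y\<rceil>) + 1" unfolding flat_from_def y_def by simp
  also have "\<dots> \<le> y + 2"
  proof -
    have "0 \<le> y" unfolding y_def by simp
    then have "real (nat \<lceil>y\<rceil>) = of_int \<lceil>y\<rceil>" by simp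
    then show ?thesis using ceiling_correct[of y] by linarith
  qed
  also have "y = deriv_factor powr (1 / (real r - c)) * real K powr (real (r * Suc r) / (real r - c))"
    unfolding y_def using deriv_factor_pos assms
    by (simp add: powr_mult powr_realpow[symmetric] powr_powr)
  finally show ?thesis .
qed

lemma card_grid_le:
  assumes "1 \<le> K"
  shows "card (grid K) + 1 \<le> (2 * r + 6) * K ^ Suc r"
proof -
  have "card (grid K) = K * (2 * height K + 1)"
    unfolding grid_def by (simp add: card_cartesian_product nat_add_distrib nat_mult_distrib)
  then have "card (grid K) + 1 = 2 * Suc r * K ^ Suc r + 3 * K + 1"
    unfolding height_def by (simp add: algebra_simps)
  also have "\<dots> \<le> 2 * Suc r * K ^ Suc r + 4 * K ^ Suc r"
  proof -
    have "K \<le> K ^ Suc r" using assms by (intro self_le_power) auto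
    then show ?thesis using assms by linarith
  qed
  also have "\<dots> = (2 * r + 6) * K ^ Suc r" by (simp add: algebra_simps)
  finally show ?thesis .
qed

lemma block_count_bound_lt_exp:
  assumes "2 \<le> m"
  shows "\<exists>K\<ge>1. flat_from K + m ^ r * (card (grid K) + 1) ^ r < m ^ K"
proof -
  define C\<^sub>1 where "C\<^sub>1 = deriv_factor powr (1 / (real r - c))"
  define a where "a = real (r * Suc r) / (real r - c)"
  define C\<^sub>2 where "C\<^sub>2 = real m ^ r * real (2 * r + 6) ^ r"
  define e where "e = Suc r * r"
  have "((\<lambda>K. (C\<^sub>1 * real K powr a + 2 + C\<^sub>2 * real K ^ e) / real m ^ K) \<longlongrightarrow> 0) at_top"
    using assms by real_asymp
  from order_tendstoD(2)[OF this, of 1]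
  have "eventually (\<lambda>K. 1 \<le> K \<and> (C\<^sub>1 * real K powr a + 2 + C\<^sub>2 * real K ^ e) / real m ^ K < 1) at_top"
    by (intro eventually_conj eventually_ge_at_top) simp_all
  then obtain K where K: "1 \<le> K" "C\<^sub>1 * real K powr a + 2 + C\<^sub>2 * real K ^ e < real m ^ K"
    using assms by (auto simp: eventually_at_top_linorder divide_less_eq)
  have flat_from: "real (flat_from K) \<le> C\<^sub>1 * real K powr a + 2"
    using flat_from_le[OF K(1)] unfolding C\<^sub>1_def a_def .
  have "m ^ r * (card (grid K) + 1) ^ r \<le> m ^ r * ((2 * r + 6) * K ^ Suc r) ^ r"
    using card_grid_le[OF K(1)] by (simp add: power_mono)
  also have "((2 * r + 6) * K ^ Suc r) ^ r = (2 * r + 6) ^ r * K ^ e"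
    unfolding e_def by (simp only: power_mult_distrib power_mult)
  finally have "real (m ^ r * (card (grid K) + 1) ^ r) \<le> C\<^sub>2 * real K ^ e"
    unfolding C\<^sub>2_def by (simp only: of_nat_le_iff[symmetric, where 'a = real]) simp
  then have "real (flat_from K + m ^ r * (card (grid K) + 1) ^ r) < real (m ^ K)"
    using flat_from K(2) by simp
  then show ?thesis using K(1) of_nat_less_iff by blast
qed

end

section \<open>Missing blocks\<close>

lemma card_image_le_card_image:
  assumes "finite (g ` A)" "\<And>a b. a \<in> A \<Longrightarrow> b \<in> A \<Longrightarrow> g a = g b \<Longrightarrow> f a = f b"
  shows "card (f ` A) \<le> card (g ` A)"
proof (rule surj_card_le[OF assms(1)])
  show "f ` A \<subseteq> (\<lambda>y. f (inv_into A g y)) ` g ` A"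
  proof
    fix y assume "y \<in> f ` A"
    then obtain a where a: "a \<in> A" "y = f a" by blast
    then have "inv_into A g (g a) \<in> A" "g (inv_into A g (g a)) = g a"
      by (simp_all add: inv_into_into f_inv_into_f)
    then have "y = f (inv_into A g (g a))" using assms(2) a by metis
    then show "y \<in> (\<lambda>y. f (inv_into A g y)) ` g ` A" using a(1) by blast
  qed
qed

locale noninteger_power_digits = noninteger_power +
  fixes m :: nat
  assumes m_ge_2: "2 \<le> m"
begin

definition digit :: "nat \<Rightarrow> nat" where
  "digit n = nat \<lfloor>real n powr c\<rfloor> mod m"

lemma digit_eq_floor_pow_mod: "int (digit (n + j)) = floor_pow n j mod int m"
  unfolding digit_def floor_pow_def by (simp add: zmod_int)

lemma block_at_digit: "length (block_at digit k n) = k" "set (block_at digit k n) \<subseteq> {0..<m}"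
  using m_ge_2 unfolding block_at_def digit_def by auto

lemma interp_dvd_if_block_eq:
  assumes "block_at digit r n = block_at digit r n'"
  shows "int m dvd interp n i - interp n' i"
proof -
  have "int m dvd floor_pow n j - floor_pow n' j" if "j < r" for j
  proof -
    have "digit (n + j) = digit (n' + j)"
      using arg_cong[OF assms, of "\<lambda>xs. xs ! j"] that unfolding block_at_def by simp
    then have "floor_pow n j mod int m = floor_pow n' j mod int m"
      using digit_eq_floor_pow_mod[of n j] digit_eq_floor_pow_mod[of n' j] by simp
    then show ?thesis by (simp add: mod_eq_dvd_iff)
  qed
  then have "int m dvd newton_coeff (floor_pow n) j - newton_coeff (floor_pow n') j" if "j < r" for j
    using that by (intro newton_coeff_dvd) auto
  moreover have "interp n i - interp n' i
      = (\<Sum>j<r. int (i choose j) * (newton_coeff (floor_pow n) j - newton_coeff (floor_pow n') j))"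
    unfolding interp_def by (simp add: sum_subtractf algebra_simps)
  ultimately show ?thesis by (auto intro!: dvd_sum dvd_mult)
qed

lemma block_at_digit_eq:
  assumes "flat K n" "flat K n'"
    and "subgraph (resid n) \<inter> grid K = subgraph (resid n') \<inter> grid K"
    and "block_at digit r n = block_at digit r n'"
  shows "block_at digit K n = block_at digit K n'"
proof -
  have "digit (n + i) = digit (n' + i)" if "i < K" for i
  proof -
    have "floor_pow n i - floor_pow n' i = interp n i - interp n' i"
      using floor_resid_eq_if_traces_eq[OF assms(1-3) that] floor_resid[of n i] floor_resid[of n' i]
      by simp
    then have "int m dvd floor_pow n i - floor_pow n' i"
      using interp_dvd_if_block_eq[OF assms(4)] by simp
    then have "floor_pow n i mod int m = floor_pow n' i mod int m" by (simp add: mod_eq_dvd_iff)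
    then have "int (digit (n + i)) = int (digit (n' + i))"
      using digit_eq_floor_pow_mod[of n i] digit_eq_floor_pow_mod[of n' i] by simp
    then show ?thesis by simp
  qed
  then show ?thesis unfolding block_at_def by simp
qed

lemma card_blocks_le:
  assumes "\<And>n. N \<le> n \<Longrightarrow> flat K n"
  shows "card (range (block_at digit K)) \<le> N + m ^ r * (card (grid K) + 1) ^ r"
proof -
  define L where "L = {xs. set xs \<subseteq> {0..<m} \<and> length xs = r}"
  define T where "T = (\<lambda>n. subgraph (resid n) \<inter> grid K) ` {N..}"
  define g where "g n = (block_at digit r n, subgraph (resid n) \<inter> grid K)" for n
  have L: "finite L" "card L = m ^ r"
    unfolding L_def using finite_lists_length_eq card_lists_length_eq[of "{0..<m}" r] by auto
  have "T \<subseteq> Pow (grid K)" unfolding T_def by auto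
  then have T: "finite T" using finite_subset unfolding grid_def by blast
  have sub: "g ` {N..} \<subseteq> L \<times> T"
  proof (rule image_subsetI)
    fix n assume "n \<in> {N..}"
    then show "g n \<in> L \<times> T" unfolding g_def L_def T_def using block_at_digit[of r n] by simp
  qed
  have "card (block_at digit K ` {N..}) \<le> card (g ` {N..})"
    using finite_subset[OF sub] L T assms block_at_digit_eq unfolding g_def
    by (intro card_image_le_card_image) auto
  also have "\<dots> \<le> card (L \<times> T)" using sub L T by (intro card_mono) auto
  also have "\<dots> \<le> m ^ r * (card (grid K) + 1) ^ r"
    using L card_traces_le[of "{N..}" K] assms unfolding T_def by (simp add: card_cartesian_product)
  finally have "card (block_at digit K ` {N..}) \<le> m ^ r * (card (grid K) + 1) ^ r" .
  moreover have "range (block_at digit K) = block_at digit K ` {..<N} \<union> block_at digit K ` {N..}"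
  proof -
    have "{..<N} \<union> {N..} = (UNIV :: nat set)" by auto
    then show ?thesis by (metis image_Un)
  qed
  ultimately show ?thesis
    using card_Un_le[of "block_at digit K ` {..<N}" "block_at digit K ` {N..}"]
      card_image_le[of "{..<N}" "block_at digit K"]
    by simp
qed

lemma missing_block:
  "\<exists>K>0. \<exists>B. length B = K \<and> set B \<subseteq> {0..<m} \<and> (\<forall>n. block_at digit K n \<noteq> B)"
proof -
  obtain K where K: "1 \<le> K" "flat_from K + m ^ r * (card (grid K) + 1) ^ r < m ^ K"
    using block_count_bound_lt_exp[OF m_ge_2] by blast
  define L where "L = {xs. set xs \<subseteq> {0..<m} \<and> length xs = K}"
  have "card (range (block_at digit K)) < card L"
    using card_blocks_le[of "flat_from K" K] flat_if_flat_from_le K(2) card_lists_length_eq[of "{0..<m}" K]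
    unfolding L_def by fastforce
  then have "range (block_at digit K) \<noteq> L" by auto
  moreover have "range (block_at digit K) \<subseteq> L" unfolding L_def using block_at_digit by blast
  ultimately obtain B where "B \<in> L" "B \<notin> range (block_at digit K)" by blast
  show ?thesis
  proof (intro exI conjI)
    show "0 < K" using K(1) by simp
    show "length B = K" "set B \<subseteq> {0..<m}" using \<open>B \<in> L\<close> unfolding L_def by simp_all
    show "\<forall>n. block_at digit K n \<noteq> B" using \<open>B \<notin> range (block_at digit K)\<close> by blast
  qed
qed

end

lemma not_k_normal_if_block_missing:
  assumes "0 < m" "length B = k" "set B \<subseteq> {0..<m}" "\<forall>n. block_at v k n \<noteq> B"
  shows "\<not> k_normal m k v"
proof
  assume "k_normal m k v"
  then have "(\<lambda>N. real (card {n. n < N \<and> block_at v k n = B}) / real N) \<longlonglongrightarrow> 1 / real m ^ k"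
    using assms(2,3) unfolding k_normal_def by blast
  moreover have "{n. n < N \<and> block_at v k n = B} = {}" for N using assms(4) by auto
  ultimately have "(\<lambda>N. 0::real) \<longlonglongrightarrow> 1 / real m ^ k" by simp
  then show False using LIMSEQ_unique[OF tendsto_const] assms(1) by fastforce
qed

theorem theorem2:
  fixes m :: nat and c :: real
  assumes "m \<ge> 2" and "c > 1" and "c \<notin> \<int>"
  defines "x \<equiv> (\<lambda>n::nat. nat \<lfloor>(real n) powr c\<rfloor> mod m)"
  shows "\<not> normal_seq m x \<and>
         (\<exists>k>0. \<exists>B. length B = k \<and> set B \<subseteq> {0..<m} \<and>
            (\<forall>n. block_at x k n \<noteq> B))"
proof -
  interpret noninteger_power_digits c m
    using assms(1-3) by unfold_locales auto
  have "x = digit" unfolding x_def digit_def ..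
  then obtain k B where "k > 0" "length B = k" "set B \<subseteq> {0..<m}" "\<forall>n. block_at x k n \<noteq> B"
    using missing_block by blast
  moreover have "\<not> k_normal m k x"
    using not_k_normal_if_block_missing calculation assms(1) by simp
  ultimately show ?thesis unfolding normal_seq_def by blast
qed

end
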